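(* For every integer $a \ge 4$ divisible by four and every odd integer $b \ge 3$, $R_\mathrm{cyc}(M_a^\mathrm{nest}, S_b) \ge a + b - 3$, where $S_b$ is any star graph of order $b$.
   Context: All graphs are finite, simple and undirected, and a graph of order $n$ has vertex set $\{0,1,\ldots,n-1\}$; $K_n$ is the complete graph on $\{0,\ldots,n-1\}$. A $2$-edge-coloring of $K_n$ assigns each edge a color in $\{1,2\}$. For a graph $H$ and such a coloring, an embedding of $H$ in color $j$ is an injective map $\varphi\colon V(H)\to V(K_n)$ such that for every edge $uv$ of $H$ the edge $\{\varphi(u),\varphi(v)\}$ has color $j$; it is increasing up to a cyclic permutation if there exists $t\in V(H)$ such that $(\varphi(t),\ldots,\varphi(|H|-1),\varphi(0),\ldots,\varphi(t-1))$ is increasing. The cyclic Ramsey number $R_\mathrm{cyc}(H_1,H_2)$ is the smallest $n$ such that every $2$-edge-coloring of $K_n$ admits an embedding of $H_1$ in color $1$ or of $H_2$ in color $2$ that is increasing up to a cyclic permutation. For even $n\ge2$, the nested matching $M_n^\mathrm{nest}$ is the graph of order $n$ whose edges are $\{v,n-1-v\}$ for $0\le v\le n/2-1$. A star graph of order $n$ is a graph on $\{0,\ldots,n-1\}$ in which one vertex (the center, arbitrary) is adjacent to all others and there are no other edges; the value of $R_\mathrm{cyc}$ does not depend on the choice of center. *)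

theory Defs
  imports Main
begin

text \<open>A graph of order h is given by its order h and its edge set E, a set of
  2-element subsets of {0..<h}.  A 2-edge-coloring of K_n is a function on
  2-element subsets of {0..<n} with values in {1,2}.\<close>

definition two_coloring :: "nat \<Rightarrow> (nat set \<Rightarrow> nat) \<Rightarrow> bool" where
  "two_coloring n c \<longleftrightarrow> (\<forall>u<n. \<forall>v<n. u \<noteq> v \<longrightarrow> c {u, v} \<in> {1, 2})"

definition cyc_embedding ::
  "nat \<Rightarrow> (nat set \<Rightarrow> nat) \<Rightarrow> nat \<Rightarrow> nat set set \<Rightarrow> nat \<Rightarrow> (nat \<Rightarrow> nat) \<Rightarrow> bool" where
  "cyc_embedding n c h E j \<phi> \<longleftrightarrow>
     inj_on \<phi> {0..<h} \<and> \<phi> ` {0..<h} \<subseteq> {0..<n} \<and>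
     (\<forall>e\<in>E. c (\<phi> ` e) = j) \<and>
     (\<exists>t<h. \<forall>i k. i < k \<and> k < h \<longrightarrow> \<phi> ((t + i) mod h) < \<phi> ((t + k) mod h))"

definition cyc_ramsey_prop :: "nat \<Rightarrow> nat \<Rightarrow> nat set set \<Rightarrow> nat \<Rightarrow> nat set set \<Rightarrow> bool" where
  "cyc_ramsey_prop n h1 E1 h2 E2 \<longleftrightarrow>
     (\<forall>c. two_coloring n c \<longrightarrow>
        (\<exists>\<phi>. cyc_embedding n c h1 E1 1 \<phi>) \<or> (\<exists>\<phi>. cyc_embedding n c h2 E2 2 \<phi>))"

definition R_cyc :: "nat \<Rightarrow> nat set set \<Rightarrow> nat \<Rightarrow> nat set set \<Rightarrow> nat" where
  "R_cyc h1 E1 h2 E2 = (LEAST n. cyc_ramsey_prop n h1 E1 h2 E2)"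

definition nest_matching :: "nat \<Rightarrow> nat set set" where
  "nest_matching n = {{v, n - 1 - v} | v. v < n div 2}"

definition star_edges :: "nat \<Rightarrow> nat \<Rightarrow> nat set set" where
  "star_edges n z = {{z, v} | v. v < n \<and> v \<noteq> z}"

end

theory Submission
  imports Defs
begin

(* View the vertices as points of the cycle Z_N, N = a + b - 4, and color a pair 2 iff its
   circular distance is at most r = (b - 3) / 2.  A color-2 star needs b - 1 = 2r + 2 points
   within distance r of its centre, but there are only 2r of them.  A cyclically increasing copy
   of the nested matching contains the edges {a/2 - 1, a/2} and {a - 1, 0}, each joining two
   vertices that are consecutive on the cycle; color 1 makes the arcs between them longer than r,
   and the a arcs between consecutive vertices of the copy cover the cycle, so
   N >= (a - 2) + 2 (r + 1) = N + 1.
   As R_cyc is a LEAST, some n must have the Ramsey property at all: n = (a/2) b does, since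
   either one of the a/2 leftmost vertices is joined in color 2 to a whole block of b - 1 later
   vertices (a star), or each has a color-1 partner in its own block, and placing the blocks in
   reverse order nests these partners into the matching. *)

lemma rotate_mod_inverse:
  fixes t h v :: nat
  assumes "t < h" and "v < h"
  shows "(t + (v + h - t) mod h) mod h = v"
proof -
  have "(t + (v + h - t) mod h) mod h = (t + (v + h - t)) mod h" by (rule mod_add_right_eq)
  also have "t + (v + h - t) = v + h" using assms(1) by simp
  finally show ?thesis using assms(2) by simp
qed

lemma cyc_embedding_intro:
  assumes "t < h"
    and incr: "\<And>i k. i < k \<Longrightarrow> k < h \<Longrightarrow> \<phi> ((t + i) mod h) < \<phi> ((t + k) mod h)"
    and "\<And>v. v < h \<Longrightarrow> \<phi> v < n" and "\<And>e. e \<in> E \<Longrightarrow> c (\<phi> ` e) = j"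
  shows "cyc_embedding n c h E j \<phi>"
proof -
  have "inj_on (\<phi> \<circ> (\<lambda>i. (t + i) mod h)) {..<h}"
    by (rule strict_mono_on_imp_inj_on) (auto intro!: strict_mono_onI incr)
  moreover have "(\<lambda>i. (t + i) mod h) ` {..<h} = {0..<h}"
  proof
    show "{0..<h} \<subseteq> (\<lambda>i. (t + i) mod h) ` {..<h}"
    proof
      fix v assume "v \<in> {0..<h}"
      then show "v \<in> (\<lambda>i. (t + i) mod h) ` {..<h}"
        using rotate_mod_inverse[OF \<open>t < h\<close>] \<open>t < h\<close>
        by (intro image_eqI[of _ _ "(v + h - t) mod h"]) auto
    qed
  qed auto
  ultimately have "inj_on \<phi> {0..<h}" by (metis inj_on_imageI)
  with assms show ?thesis unfolding cyc_embedding_def by auto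
qed

lemma R_cyc_geI:
  assumes "cyc_ramsey_prop n0 h1 E1 h2 E2"
    and "\<And>n. n < m \<Longrightarrow> \<not> cyc_ramsey_prop n h1 E1 h2 E2"
  shows "m \<le> R_cyc h1 E1 h2 E2"
proof (rule ccontr)
  assume "\<not> m \<le> R_cyc h1 E1 h2 E2"
  then have "\<not> cyc_ramsey_prop (R_cyc h1 E1 h2 E2) h1 E1 h2 E2" using assms(2) by simp
  moreover have "cyc_ramsey_prop (R_cyc h1 E1 h2 E2) h1 E1 h2 E2"
    unfolding R_cyc_def by (rule LeastI) (rule assms(1))
  ultimately show False by contradiction
qed

lemma strict_mono_on_lessThan_add_le:
  fixes w :: "nat \<Rightarrow> nat"
  assumes "strict_mono_on {..<a} w" and "i \<le> j" and "j < a"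
  shows "w i + (j - i) \<le> w j"
  using assms(2,3)
proof (induction j rule: dec_induct)
  case (step j)
  then have "w j < w (Suc j)" using strict_mono_onD[OF assms(1)] by simp
  with step show ?case by simp
qed simp

definition cyc_gap :: "nat \<Rightarrow> nat \<Rightarrow> (nat \<Rightarrow> nat) \<Rightarrow> nat \<Rightarrow> nat" where
  "cyc_gap N a w u = (if Suc u < a then w (Suc u) - w u else N + w 0 - w u)"

lemma two_long_cyc_gaps_le:
  fixes w :: "nat \<Rightarrow> nat"
  assumes mono: "strict_mono_on {..<a} w" and "w (a - 1) < N"
    and "u1 < u2" "u2 < a" "r < cyc_gap N a w u1" "r < cyc_gap N a w u2"
  shows "a + 2 * r \<le> N"
proof -
  note step = strict_mono_on_lessThan_add_le[OF mono]
  have spacing: "w 0 + u1 \<le> w u1" "w (Suc u1) + (u2 - Suc u1) \<le> w u2" "w u1 < w (Suc u1)"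
    using step[of 0 u1] step[of "Suc u1" u2] strict_mono_onD[OF mono, of u1 "Suc u1"] assms(3,4)
    by auto
  have gap1: "r < w (Suc u1) - w u1"
    using assms(3-5) by (simp add: cyc_gap_def)
  show ?thesis
  proof (cases "Suc u2 < a")
    case True
    then have "w (Suc u2) + (a - 1 - Suc u2) \<le> w (a - 1)" "w u2 < w (Suc u2)"
      using step[of "Suc u2" "a - 1"] strict_mono_onD[OF mono, of u2 "Suc u2"] by auto
    moreover have "r < w (Suc u2) - w u2" using True assms(6) by (simp add: cyc_gap_def)
    ultimately show ?thesis using spacing gap1 assms(2) by linarith
  next
    case False
    then have "u2 = a - 1" using assms(4) by simp
    moreover have "r < N + w 0 - w u2" using False assms(6) by (simp add: cyc_gap_def)
    ultimately have "r < N + w 0 - w (a - 1)" "w (Suc u1) + (a - 1 - Suc u1) \<le> w (a - 1)"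
      using spacing(2) by simp_all
    with spacing gap1 show ?thesis by linarith
  qed
qed

definition circ_dist :: "nat \<Rightarrow> nat \<Rightarrow> nat \<Rightarrow> nat" where
  "circ_dist N x y = min (max x y - min x y) (N - (max x y - min x y))"

definition near_coloring :: "nat \<Rightarrow> nat \<Rightarrow> nat set \<Rightarrow> nat" where
  "near_coloring N r e = (if \<exists>x y. e = {x, y} \<and> circ_dist N x y \<le> r then 2 else 1)"

lemma circ_dist_commute: "circ_dist N x y = circ_dist N y x"
  by (simp add: circ_dist_def max.commute min.commute)

lemma near_coloring_pair: "near_coloring N r {x, y} = (if circ_dist N x y \<le> r then 2 else 1)"
  unfolding near_coloring_def by (auto simp: doubleton_eq_iff circ_dist_commute)

lemma two_coloring_near_coloring: "two_coloring n (near_coloring N r)"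
  by (simp add: two_coloring_def near_coloring_def)

lemma card_circ_dist_le:
  assumes "x < N"
  shows "card {y. y < N \<and> y \<noteq> x \<and> circ_dist N x y \<le> r} \<le> 2 * r"
proof -
  let ?shift = "\<lambda>k. (x + k) mod N"
  let ?K = "{1..r} \<union> {N - r..<N}"
  have "{y. y < N \<and> y \<noteq> x \<and> circ_dist N x y \<le> r} \<subseteq> ?shift ` ?K"
  proof
    fix y assume y: "y \<in> {y. y < N \<and> y \<noteq> x \<and> circ_dist N x y \<le> r}"
    define k where "k = (if x < y then y - x else y + N - x)"
    have "k \<in> ?K" using y assms by (auto simp: k_def circ_dist_def)
    moreover have "y = ?shift k" using y assms by (auto simp: k_def)
    ultimately show "y \<in> ?shift ` ?K" by blast
  qed
  then have "card {y. y < N \<and> y \<noteq> x \<and> circ_dist N x y \<le> r} \<le> card (?shift ` ?K)"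
    by (rule card_mono[rotated]) simp
  also have "\<dots> \<le> card ?K" by (rule card_image_le) simp
  also have "\<dots> \<le> card {1..r} + card {N - r..<N}" by (rule card_Un_le)
  also have "\<dots> \<le> 2 * r" by simp
  finally show ?thesis .
qed

lemma star_embedding_near_coloring_le:
  assumes emb: "cyc_embedding n (near_coloring N r) b (star_edges b z) 2 \<phi>"
    and "n \<le> N" and "z < b"
  shows "b \<le> 2 * r + 1"
proof -
  have inj: "inj_on \<phi> {0..<b}" and "\<phi> ` {0..<b} \<subseteq> {0..<n}"
    using emb by (simp_all add: cyc_embedding_def)
  with \<open>n \<le> N\<close> have img: "\<phi> v < N" if "v < b" for v
    using that by fastforce
  have near: "circ_dist N (\<phi> z) (\<phi> v) \<le> r" if "v < b" "v \<noteq> z" for v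
  proof -
    have "{z, v} \<in> star_edges b z" using that by (auto simp: star_edges_def)
    then have "near_coloring N r {\<phi> z, \<phi> v} = 2" using emb by (auto simp: cyc_embedding_def)
    then show ?thesis by (simp add: near_coloring_pair split: if_splits)
  qed
  have "b - 1 = card (\<phi> ` ({0..<b} - {z}))"
    using \<open>z < b\<close> by (simp add: card_image inj_on_subset[OF inj])
  also have "\<dots> \<le> card {y. y < N \<and> y \<noteq> \<phi> z \<and> circ_dist N (\<phi> z) y \<le> r}"
    using \<open>z < b\<close> by (intro card_mono) (auto simp: img near inj_on_eq_iff[OF inj])
  also have "\<dots> \<le> 2 * r" using img \<open>z < b\<close> by (intro card_circ_dist_le)
  finally show ?thesis by simp
qed

lemma near_coloring_1_imp_long_cyc_gap:
  fixes w :: "nat \<Rightarrow> nat"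
  assumes mono: "strict_mono_on {..<a} w" and "w (a - 1) < N" and "2 \<le> a"
    and "u < a" and "near_coloring N r {w u, w (Suc u mod a)} = 1"
  shows "r < cyc_gap N a w u"
proof -
  have far: "r < circ_dist N (w u) (w (Suc u mod a))"
    using assms(5) by (simp add: near_coloring_pair split: if_splits)
  show ?thesis
  proof (cases "Suc u < a")
    case True
    then have "w u < w (Suc u)" by (auto intro!: strict_mono_onD[OF mono])
    with True far show ?thesis by (simp add: circ_dist_def cyc_gap_def)
  next
    case False
    then have "Suc u = a" using assms(4) by simp
    moreover have "w 0 < w u" using assms(3,4) False by (auto intro!: strict_mono_onD[OF mono])
    ultimately show ?thesis using far assms(2) by (simp add: circ_dist_def cyc_gap_def)
  qed
qed

lemma cyc_embedding_near_coloring_two_cyclic_edges: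
  assumes emb: "cyc_embedding n (near_coloring N r) a E 1 \<phi>" and "n \<le> N"
    and edges: "{v1, Suc v1 mod a} \<in> E" "{v2, Suc v2 mod a} \<in> E"
    and "v1 \<noteq> v2" "v1 < a" "v2 < a"
  shows "a + 2 * r \<le> N"
proof -
  obtain t where "t < a"
    and incr: "\<And>i k. i < k \<Longrightarrow> k < a \<Longrightarrow> \<phi> ((t + i) mod a) < \<phi> ((t + k) mod a)"
    using emb unfolding cyc_embedding_def by blast
  define w where "w i = \<phi> ((t + i) mod a)" for i
  have mono: "strict_mono_on {..<a} w" by (auto intro!: strict_mono_onI simp: w_def incr)
  have "\<phi> ` {0..<a} \<subseteq> {0..<n}" using emb by (simp add: cyc_embedding_def)
  then have "w (a - 1) < n" using \<open>v1 < a\<close> unfolding w_def by (simp add: image_subset_iff)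
  with \<open>n \<le> N\<close> have "w (a - 1) < N" by simp
  have "2 \<le> a" using assms(5-7) by linarith
  define pos where "pos v = (v + a - t) mod a" for v
  have pos: "pos v < a" "(t + pos v) mod a = v" if "v < a" for v
    using \<open>t < a\<close> that by (simp_all add: pos_def rotate_mod_inverse)
  have gap: "r < cyc_gap N a w (pos v)" if "{v, Suc v mod a} \<in> E" "v < a" for v
  proof (rule near_coloring_1_imp_long_cyc_gap[OF mono \<open>w (a - 1) < N\<close> \<open>2 \<le> a\<close>])
    show "pos v < a" using pos(1)[OF \<open>v < a\<close>] .
    have "w (pos v) = \<phi> v" "w (Suc (pos v) mod a) = \<phi> (Suc v mod a)"
      using pos(2)[OF \<open>v < a\<close>] by (simp_all add: w_def mod_add_right_eq) (metis mod_Suc_eq)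
    then show "near_coloring N r {w (pos v), w (Suc (pos v) mod a)} = 1"
      using emb that by (auto simp: cyc_embedding_def)
  qed
  have "pos v1 \<noteq> pos v2" using pos(2) assms(5-7) by metis
  then consider "pos v1 < pos v2" | "pos v2 < pos v1" by linarith
  then show ?thesis
    using two_long_cyc_gaps_le[OF mono \<open>w (a - 1) < N\<close>] gap[OF edges(1) \<open>v1 < a\<close>]
      gap[OF edges(2) \<open>v2 < a\<close>] pos(1) assms(6,7) by cases blast+
qed

lemma nest_matching_embedding_near_coloring_le:
  assumes emb: "cyc_embedding n (near_coloring N r) a (nest_matching a) 1 \<phi>"
    and "n \<le> N" and "even a" and "2 \<le> a"
  shows "a + 2 * r \<le> N"
proof -
  define h where "h = a div 2"
  have "{h - 1, Suc (h - 1) mod a} = {h - 1, a - 1 - (h - 1)}" "h - 1 < a div 2"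
    using assms(3,4) by (auto simp: h_def)
  then have inner: "{h - 1, Suc (h - 1) mod a} \<in> nest_matching a"
    unfolding nest_matching_def by blast
  have "{a - 1, Suc (a - 1) mod a} = {0, a - 1 - 0}" "0 < a div 2"
    using assms(4) by auto
  then have outer: "{a - 1, Suc (a - 1) mod a} \<in> nest_matching a"
    unfolding nest_matching_def by blast
  have "h - 1 \<noteq> a - 1" "h - 1 < a" "a - 1 < a" using assms(4) by (auto simp: h_def)
  then show ?thesis
    using cyc_embedding_near_coloring_two_cyclic_edges[OF emb \<open>n \<le> N\<close> inner outer] by blast
qed

lemma star_embedding_from_block:
  assumes "x < y" and "y + (b - 1) \<le> n" and "z < b"
    and block: "\<And>j. j < b - 1 \<Longrightarrow> c {x, y + j} = 2"
  shows "\<exists>\<phi>. cyc_embedding n c b (star_edges b z) 2 \<phi>"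
proof -
  define \<psi> where "\<psi> l = (if l = 0 then x else y + (l - 1))" for l
  define \<phi> where "\<phi> v = \<psi> ((v + b - z) mod b)" for v
  have rot: "\<phi> ((z + l) mod b) = \<psi> l" if "l < b" for l
  proof -
    have "(z + l) mod b + b - z = (z + l) mod b + (b - z)" using \<open>z < b\<close> by simp
    then have "((z + l) mod b + b - z) mod b = (z + l + (b - z)) mod b"
      by (simp only: mod_add_left_eq)
    also have "\<dots> = (l + b) mod b"
      by (rule arg_cong[where f = "\<lambda>m. m mod b"]) (use \<open>z < b\<close> in simp)
    also have "\<dots> = l" using that by simp
    finally show ?thesis by (simp add: \<phi>_def)
  qed
  have "cyc_embedding n c b (star_edges b z) 2 \<phi>"
  proof (rule cyc_embedding_intro[OF \<open>z < b\<close>])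
    show "\<phi> ((z + i) mod b) < \<phi> ((z + k) mod b)" if "i < k" "k < b" for i k
      using that \<open>x < y\<close> by (auto simp: rot \<psi>_def)
    show "\<phi> v < n" for v
    proof -
      have "(v + b - z) mod b < b" using \<open>z < b\<close> by simp
      then show ?thesis using assms(1,2) by (auto simp: \<phi>_def \<psi>_def)
    qed
    show "c (\<phi> ` e) = 2" if e: "e \<in> star_edges b z" for e
    proof -
      obtain v where v: "e = {z, v}" "v < b" "v \<noteq> z" using e by (auto simp: star_edges_def)
      define l where "l = (v + b - z) mod b"
      have "0 < l" "l < b" using v \<open>z < b\<close> by (auto simp: l_def mod_if)
      then have "\<phi> ` e = {x, y + (l - 1)}"
        using v by (simp add: \<phi>_def \<psi>_def l_def insert_commute)
      with block[of "l - 1"] \<open>0 < l\<close> \<open>l < b\<close> show ?thesis by simp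
    qed
  qed
  then show ?thesis by blast
qed

lemma nest_matching_embedding_from_partners:
  assumes "a = 2 * k" and "0 < k" and partner: "\<And>i. i < k \<Longrightarrow> k \<le> g i \<and> g i < n"
    and decr: "\<And>i j. i < j \<Longrightarrow> j < k \<Longrightarrow> g j < g i"
    and color: "\<And>i. i < k \<Longrightarrow> c {i, g i} = 1"
  shows "\<exists>\<phi>. cyc_embedding n c a (nest_matching a) 1 \<phi>"
proof -
  define \<phi> where "\<phi> v = (if v < k then v else g (a - 1 - v))" for v
  have "cyc_embedding n c a (nest_matching a) 1 \<phi>"
  proof (rule cyc_embedding_intro[of 0])
    show "0 < a" using assms(1,2) by simp
    show "\<phi> ((0 + i) mod a) < \<phi> ((0 + l) mod a)" if "i < l" "l < a" for i l
    proof -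
      have "\<phi> i < \<phi> l"
      proof (cases "l < k")
        case False
        then have "a - 1 - l < k" using that assms(1) by simp
        then show ?thesis
          using False that assms(1) partner[of "a - 1 - l"] decr[of "a - 1 - l" "a - 1 - i"]
          by (auto simp: \<phi>_def)
      qed (use that in \<open>simp add: \<phi>_def\<close>)
      with that show ?thesis by simp
    qed
    show "\<phi> v < n" for v
      using partner[of 0] partner[of "a - 1 - v"] assms(1,2) by (auto simp: \<phi>_def)
    show "c (\<phi> ` e) = 1" if e: "e \<in> nest_matching a" for e
    proof -
      obtain v where "e = {v, a - 1 - v}" "v < k"
        using e assms(1) by (auto simp: nest_matching_def)
      with assms(1) color[of v] show ?thesis by (simp add: \<phi>_def insert_commute)
    qed
  qed
  then show ?thesis by blast
qed

lemma cyc_ramsey_prop_nest_star: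
  assumes "even a" and "0 < a" and "z < b"
  shows "cyc_ramsey_prop (a div 2 * b) a (nest_matching a) b (star_edges b z)"
  unfolding cyc_ramsey_prop_def
proof (intro allI impI)
  fix c assume c: "two_coloring (a div 2 * b) c"
  define k m where "k = a div 2" and "m = b - 1"
  have n: "a div 2 * b = k + k * m" using \<open>z < b\<close> by (simp add: k_def m_def algebra_simps)
  define block where "block i = k + (k - 1 - i) * m" for i
  have block_bound: "k \<le> block i \<and> block i + m \<le> k + k * m" if "i < k" for i
  proof -
    have "k - i = Suc (k - 1 - i)" using that by simp
    then have "(k - 1 - i) * m + m = (k - i) * m" by (metis add.commute mult_Suc)
    then show ?thesis using diff_le_self[of k i] by (simp add: block_def)
  qed
  have block_order: "block j + m \<le> block i" if "i < j" "j < k" for i j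
  proof -
    have "k - j = Suc (k - 1 - j)" using that by simp
    then have "(k - 1 - j) * m + m = (k - j) * m" by (metis add.commute mult_Suc)
    also have "\<dots> \<le> (k - 1 - i) * m" using that by (intro mult_le_mono1) simp
    finally show ?thesis by (simp add: block_def)
  qed
  show "(\<exists>\<phi>. cyc_embedding (a div 2 * b) c a (nest_matching a) 1 \<phi>) \<or>
        (\<exists>\<phi>. cyc_embedding (a div 2 * b) c b (star_edges b z) 2 \<phi>)"
  proof (cases "\<exists>i<k. \<forall>j<m. c {i, block i + j} = 2")
    case True
    then obtain i where "i < k" "\<And>j. j < m \<Longrightarrow> c {i, block i + j} = 2" by blast
    with block_bound[of i] have "\<exists>\<phi>. cyc_embedding (a div 2 * b) c b (star_edges b z) 2 \<phi>"
      by (intro star_embedding_from_block[of i "block i"] \<open>z < b\<close>) (auto simp: n m_def)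
    then show ?thesis ..
  next
    case False
    then obtain j where j: "\<And>i. i < k \<Longrightarrow> j i < m \<and> c {i, block i + j i} \<noteq> 2" by metis
    have "\<exists>\<phi>. cyc_embedding (a div 2 * b) c a (nest_matching a) 1 \<phi>"
    proof (rule nest_matching_embedding_from_partners[where g = "\<lambda>i. block i + j i"])
      show "a = 2 * k" "0 < k" using assms(1,2) by (auto simp: k_def)
      show "k \<le> block i + j i \<and> block i + j i < a div 2 * b" if "i < k" for i
        using block_bound[OF that] j[OF that] by (simp add: n)
      show "block i' + j i' < block i + j i" if "i < i'" "i' < k" for i i'
        using block_order[OF that] j[OF that(2)] by simp
      show "c {i, block i + j i} = 1" if "i < k" for i
      proof -
        have "i < block i + j i" "block i + j i < a div 2 * b"
          using block_bound[OF that] j[OF that] that by (auto simp: n)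
        then have "c {i, block i + j i} \<in> {1, 2}" using c unfolding two_coloring_def by simp
        with j[OF that] show ?thesis by simp
      qed
    qed
    then show ?thesis ..
  qed
qed

theorem proposition4p34:
  fixes a b z :: nat
  assumes "a \<ge> 4" and "4 dvd a" and "b \<ge> 3" and "odd b" and "z < b"
  shows "R_cyc a (nest_matching a) b (star_edges b z) \<ge> a + b - 3"
proof (rule R_cyc_geI)
  have "even a" using \<open>4 dvd a\<close> by (metis dvd_trans even_numeral)
  then show "cyc_ramsey_prop (a div 2 * b) a (nest_matching a) b (star_edges b z)"
    using assms by (intro cyc_ramsey_prop_nest_star) auto
  define N r where "N = a + b - 4" and "r = (b - 3) div 2"
  have "b = 2 * r + 3" using \<open>b \<ge> 3\<close> \<open>odd b\<close> by (auto simp: r_def elim!: oddE)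
  show "\<not> cyc_ramsey_prop n a (nest_matching a) b (star_edges b z)" if "n < a + b - 3" for n
  proof
    assume "cyc_ramsey_prop n a (nest_matching a) b (star_edges b z)"
    then have "(\<exists>\<phi>. cyc_embedding n (near_coloring N r) a (nest_matching a) 1 \<phi>) \<or>
        (\<exists>\<phi>. cyc_embedding n (near_coloring N r) b (star_edges b z) 2 \<phi>)"
      unfolding cyc_ramsey_prop_def using two_coloring_near_coloring by blast
    moreover have "n \<le> N" using that by (simp add: N_def)
    ultimately show False
      using nest_matching_embedding_near_coloring_le[OF _ _ \<open>even a\<close>]
        star_embedding_near_coloring_le[OF _ _ \<open>z < b\<close>] \<open>a \<ge> 4\<close> \<open>b = 2 * r + 3\<close>
      by (fastforce simp: N_def)
  qed
qed

end
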